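(* Let $n\ge 1$ and let $F(z)=\sum_{k=1}^\infty b_k z^k$ be an extremal function for the problem $$ M_n=\sup\Big\{ \sum_{k=1}^n k|c_k|^2 \,:\, \|f\|_{\mathcal{B}}\le 1,\ f(z)=\sum_{k=1}^\infty c_k z^k\Big\}, $$ i.e. $\|F\|_{\mathcal{B}}\le 1$ and $\sum_{k=1}^n k|b_k|^2=M_n$. Then $b_n b_{n+1}=0$, i.e. $b_n=0$ or $b_{n+1}=0$.
   Context: $\mathbb{D}$ is the open unit disc. The Bloch space $\mathcal{B}$ consists of analytic functions $f$ on $\mathbb{D}$ with finite norm $\|f\|_{\mathcal{B}}=|f(0)|+\sup_{z\in\mathbb{D}}(1-|z|^2)|f'(z)|$. *)

theory Defs
  imports "HOL-Complex_Analysis.Complex_Analysis"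
begin

text \<open>Bloch seminorm sup_{z in D} (1-|z|^2)|f'(z)|, taken in the extended reals
  so that it is meaningful also when unbounded.\<close>
definition bloch_seminorm :: "(complex \<Rightarrow> complex) \<Rightarrow> ereal" where
  "bloch_seminorm f = (SUP z\<in>ball 0 1. ereal ((1 - (cmod z)\<^sup>2) * cmod (deriv f z)))"

definition bloch_norm :: "(complex \<Rightarrow> complex) \<Rightarrow> ereal" where
  "bloch_norm f = ereal (cmod (f 0)) + bloch_seminorm f"

definition bloch_space :: "(complex \<Rightarrow> complex) set" where
  "bloch_space = {f. f holomorphic_on ball 0 1 \<and> bloch_norm f < \<infinity>}"

definition taylor_coeff :: "(complex \<Rightarrow> complex) \<Rightarrow> nat \<Rightarrow> complex" where
  "taylor_coeff f k = (deriv ^^ k) f 0 / of_nat (fact k)"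

text \<open>Admissible functions: f in the Bloch space, f(z) = sum_{k>=1} c_k z^k (i.e. f(0)=0),
  with Bloch norm at most 1.\<close>
definition bloch_admissible :: "(complex \<Rightarrow> complex) set" where
  "bloch_admissible = {f. f \<in> bloch_space \<and> f 0 = 0 \<and> bloch_norm f \<le> 1}"

definition coeff_energy :: "nat \<Rightarrow> (complex \<Rightarrow> complex) \<Rightarrow> real" where
  "coeff_energy n f = (\<Sum>k=1..n. real k * (cmod (taylor_coeff f k))\<^sup>2)"

definition M_bloch :: "nat \<Rightarrow> real" where
  "M_bloch n = Sup (coeff_energy n ` bloch_admissible)"

end

theory Submission
  imports Defs
begin

(* Suppose b_n b_(n+1) \<noteq> 0. Precompose F with the disc automorphism
   z \<mapsto> (z + a) / (1 + conj a z) and subtract F a, its value at 0. The Bloch seminorm is invariant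
   under disc automorphisms (Schwarz-Pick), so the new function is admissible again. To first
   order in a, its k-th coefficient is b_k + a (k+1) b_(k+1) - conj a (k-1) b_(k-1). In the
   energy sum_(k \<le> n) k |b_k|^2 these first-order changes telescope to
   2 n (n+1) Re (a conj(b_n) b_(n+1)). Cauchy estimates on the circle |z| = 1/2 bound the
   O(|a|^2) remainder. Choosing arg a so that this term is positive and |a| small, the
   energy exceeds M_n, a contradiction. *)

definition moebius_disc :: "complex \<Rightarrow> complex \<Rightarrow> complex" where
  "moebius_disc a z = (z + a) / (1 + cnj a * z)"

lemma moebius_disc_eq_Moebius_function: "moebius_disc a = Moebius_function 0 (- a)"
  by (simp add: fun_eq_iff moebius_disc_def Moebius_function_def)

lemma norm_moebius_disc_less_1:
  "cmod a < 1 \<Longrightarrow> cmod z < 1 \<Longrightarrow> cmod (moebius_disc a z) < 1"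
  by (simp add: moebius_disc_eq_Moebius_function Moebius_function_norm_lt_1)

lemma moebius_disc_denom_nonzero:
  assumes "cmod a < 1" "cmod z < 1"
  shows "1 + cnj a * z \<noteq> 0"
proof -
  have "cmod (cnj a * z) < 1"
    using assms mult_left_le[of "cmod z" "cmod a"] by (simp add: norm_mult)
  then show ?thesis
    by (metis add_eq_0_iff norm_minus_cancel norm_one order_less_irrefl)
qed

lemma one_minus_norm_moebius_disc_sq:
  assumes "cmod a < 1" "cmod z < 1"
  shows "1 - (cmod (moebius_disc a z))\<^sup>2
    = (1 - (cmod a)\<^sup>2) * (1 - (cmod z)\<^sup>2) / (cmod (1 + cnj a * z))\<^sup>2"
proof -
  have "(cmod (1 + cnj a * z))\<^sup>2 - (cmod (z + a))\<^sup>2 = (1 - (cmod a)\<^sup>2) * (1 - (cmod z)\<^sup>2)"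
    by (simp only: cmod_power2) (simp add: power2_eq_square algebra_simps)
  then show ?thesis
    using moebius_disc_denom_nonzero[OF assms]
    by (simp add: moebius_disc_def norm_divide power_divide field_simps)
qed

lemma moebius_disc_has_field_derivative:
  assumes "cmod a < 1" "cmod z < 1"
  shows "(moebius_disc a has_field_derivative (1 - (cmod a)\<^sup>2) / (1 + cnj a * z)\<^sup>2) (at z)"
proof -
  have "cnj a * a = (cmod a)\<^sup>2"
    using complex_norm_square[of a] by (simp add: mult.commute)
  then show ?thesis
    unfolding moebius_disc_def[abs_def] using moebius_disc_denom_nonzero[OF assms]
    by (auto intro!: derivative_eq_intros simp: power2_eq_square algebra_simps)
qed

lemma moebius_disc_deriv_Schwarz_Pick:
  assumes "cmod a < 1" "cmod z < 1"
  shows "(1 - (cmod z)\<^sup>2) * cmod ((1 - (cmod a)\<^sup>2) / (1 + cnj a * z)\<^sup>2)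
    = 1 - (cmod (moebius_disc a z))\<^sup>2"
proof -
  have "0 \<le> 1 - (cmod a)\<^sup>2"
    using assms(1) by (simp add: abs_square_le_1)
  then have "cmod (1 - (complex_of_real (cmod a))\<^sup>2) = 1 - (cmod a)\<^sup>2"
    by (metis norm_of_real of_real_1 of_real_diff of_real_power abs_of_nonneg)
  then show ?thesis
    unfolding one_minus_norm_moebius_disc_sq[OF assms]
    by (simp add: norm_divide norm_power)
qed

lemma bloch_admissible_iff:
  "f \<in> bloch_admissible \<longleftrightarrow> f holomorphic_on ball 0 1 \<and> f 0 = 0 \<and>
     (\<forall>z\<in>ball 0 1. (1 - (cmod z)\<^sup>2) * cmod (deriv f z) \<le> 1)"
proof -
  have "bloch_norm f \<le> 1 \<longleftrightarrow> (\<forall>z\<in>ball 0 1. (1 - (cmod z)\<^sup>2) * cmod (deriv f z) \<le> 1)"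
    if "f 0 = 0"
    using that by (simp add: bloch_norm_def bloch_seminorm_def SUP_le_iff one_ereal_def)
  then show ?thesis
    by (auto simp: bloch_admissible_def bloch_space_def intro: order.strict_trans1)
qed

lemma bloch_admissible_moebius_compose:
  assumes F: "F \<in> bloch_admissible" and a: "cmod a < 1"
  shows "(\<lambda>z. F (moebius_disc a z) - F a) \<in> bloch_admissible"
proof -
  have hol: "F holomorphic_on ball 0 1"
    and bloch: "\<And>w. cmod w < 1 \<Longrightarrow> (1 - (cmod w)\<^sup>2) * cmod (deriv F w) \<le> 1"
    using F by (auto simp: bloch_admissible_iff)
  define d where "d z = deriv F (moebius_disc a z) * ((1 - (cmod a)\<^sup>2) / (1 + cnj a * z)\<^sup>2)" for z
  have deriv_G: "((\<lambda>z. F (moebius_disc a z) - F a) has_field_derivative d z) (at z)"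
    if z: "cmod z < 1" for z
  proof -
    have "(F has_field_derivative deriv F (moebius_disc a z)) (at (moebius_disc a z))"
      using hol norm_moebius_disc_less_1[OF a z] by (intro holomorphic_derivI) auto
    from DERIV_chain2[OF this moebius_disc_has_field_derivative[OF a z]]
    show ?thesis
      unfolding d_def by (auto intro: derivative_eq_intros)
  qed
  show ?thesis
    unfolding bloch_admissible_iff
  proof (intro conjI ballI)
    show "(\<lambda>z. F (moebius_disc a z) - F a) holomorphic_on ball 0 1"
      using deriv_G by (force simp: holomorphic_on_open field_differentiable_def)
    show "F (moebius_disc a 0) - F a = 0"
      by (simp add: moebius_disc_def)
    fix z :: complex assume "z \<in> ball 0 1"
    then have z: "cmod z < 1" by simp
    have "(1 - (cmod z)\<^sup>2) * cmod (deriv (\<lambda>z. F (moebius_disc a z) - F a) z)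
        = (1 - (cmod z)\<^sup>2) * cmod ((1 - (cmod a)\<^sup>2) / (1 + cnj a * z)\<^sup>2)
          * cmod (deriv F (moebius_disc a z))"
      unfolding DERIV_imp_deriv[OF deriv_G[OF z]] d_def norm_mult by (simp only: mult_ac)
    also have "\<dots> = (1 - (cmod (moebius_disc a z))\<^sup>2) * cmod (deriv F (moebius_disc a z))"
      by (simp only: moebius_disc_deriv_Schwarz_Pick[OF a z])
    also have "\<dots> \<le> 1"
      using bloch norm_moebius_disc_less_1[OF a z] by blast
    finally show "(1 - (cmod z)\<^sup>2) * cmod (deriv (\<lambda>z. F (moebius_disc a z) - F a) z) \<le> 1" .
  qed
qed

lemma taylor_coeff_deriv:
  "taylor_coeff (deriv f) k = of_nat (Suc k) * taylor_coeff f (Suc k)"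
proof -
  have "taylor_coeff (deriv f) k = (deriv ^^ Suc k) f 0 / fact k"
    by (simp add: taylor_coeff_def funpow_Suc_right del: funpow.simps)
  then show ?thesis
    unfolding taylor_coeff_def by (metis fact_cancel of_nat_fact times_divide_eq_right)
qed

lemma norm_taylor_coeff_le_Cauchy:
  assumes "g holomorphic_on S" "open S" "cball 0 r \<subseteq> S" "0 < r"
    and "\<And>z. cmod z = r \<Longrightarrow> cmod (g z) \<le> M"
  shows "cmod (taylor_coeff g k) \<le> M / r ^ k"
proof -
  have "cmod ((deriv ^^ k) g 0) \<le> fact k * M / r ^ k"
  proof (rule Cauchy_inequality)
    show "g holomorphic_on ball 0 r"
      using assms(1,3) ball_subset_cball by (blast intro: holomorphic_on_subset)
    show "continuous_on (cball 0 r) g"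
      using assms(1,3) by (blast intro: holomorphic_on_imp_continuous_on continuous_on_subset)
  qed (use assms(4,5) in auto)
  then show ?thesis
    by (simp add: taylor_coeff_def norm_divide field_simps)
qed

lemma norm_taylor_coeff_bloch_admissible_le:
  assumes "f \<in> bloch_admissible"
  shows "cmod (taylor_coeff f (Suc k)) \<le> 2 ^ Suc k"
proof -
  have hol: "f holomorphic_on ball 0 1"
    and bloch: "\<And>z. cmod z < 1 \<Longrightarrow> (1 - (cmod z)\<^sup>2) * cmod (deriv f z) \<le> 1"
    using assms by (auto simp: bloch_admissible_iff)
  have "cmod (deriv f z) \<le> 4/3" if "cmod z = 1/2" for z
    using bloch[of z] that by (simp add: power2_eq_square)
  then have "cmod (taylor_coeff (deriv f) k) \<le> 4/3 / (1/2) ^ k"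
    using hol by (intro norm_taylor_coeff_le_Cauchy[of _ "ball 0 1"] holomorphic_deriv) auto
  then have "real (Suc k) * cmod (taylor_coeff f (Suc k)) \<le> 4/3 * 2 ^ k"
    by (simp add: taylor_coeff_deriv norm_mult power_divide del: of_nat_Suc)
  also have "\<dots> \<le> real (Suc k) * 2 ^ Suc k"
    by simp
  finally show ?thesis
    by (rule mult_left_le_imp_le) simp
qed

lemma coeff_energy_le_M_bloch:
  assumes "f \<in> bloch_admissible"
  shows "coeff_energy n f \<le> M_bloch n"
  unfolding M_bloch_def
proof (rule cSup_upper)
  have "coeff_energy n g \<le> (\<Sum>k=1..n. real k * 4 ^ k)" if "g \<in> bloch_admissible" for g
    unfolding coeff_energy_def
  proof (intro sum_mono mult_left_mono)
    fix k :: nat assume "k \<in> {1..n}"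
    then obtain j where "k = Suc j" by (cases k) auto
    then have "(cmod (taylor_coeff g k))\<^sup>2 \<le> (2 ^ k)\<^sup>2"
      using norm_taylor_coeff_bloch_admissible_le[OF that] by (intro power_mono) auto
    then show "(cmod (taylor_coeff g k))\<^sup>2 \<le> 4 ^ k"
      by (simp add: power_even_eq[symmetric] power_mult)
  qed auto
  then show "bdd_above (coeff_energy n ` bloch_admissible)"
    by (rule bdd_aboveI2)
qed (use assms in simp)

(* The part of F (moebius_disc a z) - F a that is linear in a and conj a,
   since moebius_disc a z = z + a - conj a z^2 + O(|a|^2). *)
definition moebius_variation :: "(complex \<Rightarrow> complex) \<Rightarrow> complex \<Rightarrow> complex \<Rightarrow> complex" where
  "moebius_variation F a z = F z + a * (deriv F z - deriv F 0) - cnj a * (z\<^sup>2 * deriv F z)"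

definition coeff_variation :: "(nat \<Rightarrow> complex) \<Rightarrow> complex \<Rightarrow> nat \<Rightarrow> complex" where
  "coeff_variation b a k = a * of_nat (k + 1) * b (k + 1) - cnj a * of_nat (k - 1) * b (k - 1)"

lemma taylor_coeff_moebius_variation:
  assumes "F holomorphic_on ball 0 1" "k \<ge> 1"
  shows "taylor_coeff (moebius_variation F a) k
    = taylor_coeff F k + coeff_variation (taylor_coeff F) a k"
proof -
  define A where "A = fps_expansion F 0"
  have A_nth: "A $ j = taylor_coeff F j" for j
    by (simp add: A_def fps_expansion_def taylor_coeff_def)
  have "F has_fps_expansion A"
    unfolding A_def using assms(1) by (intro has_fps_expansion_fps_expansion) auto
  then have "moebius_variation F a has_fps_expansion
      A + fps_const a * (fps_deriv A - fps_const (deriv F 0)) - fps_const (cnj a) * (fps_X\<^sup>2 * fps_deriv A)"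
    unfolding moebius_variation_def[abs_def] by (intro fps_expansion_intros)
  then have "taylor_coeff (moebius_variation F a) k
      = (A + fps_const a * (fps_deriv A - fps_const (deriv F 0))
          - fps_const (cnj a) * (fps_X\<^sup>2 * fps_deriv A)) $ k"
    unfolding taylor_coeff_def of_nat_fact by (rule fps_nth_fps_expansion[symmetric])
  also have "\<dots> = A $ k + a * (of_nat (k + 1) * A $ (k + 1))
      - cnj a * (if k < 2 then 0 else of_nat (k - 1) * A $ (k - 1))"
    using assms(2) by (simp add: fps_X_power_mult_nth) (simp add: numeral_2_eq_2 Suc_diff_Suc)
  also have "\<dots> = taylor_coeff F k + coeff_variation (taylor_coeff F) a k"
    using assms(2) by (auto simp: A_nth coeff_variation_def le_Suc_eq numeral_2_eq_2)
  finally show ?thesis .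
qed

lemma moebius_disc_minus_id_bounds:
  assumes a: "cmod a \<le> 1/10" and z: "cmod z = 1/2"
  shows "cmod (moebius_disc a z - z) \<le> 2 * cmod a"
    and "cmod (moebius_disc a z - z - (a - cnj a * z\<^sup>2)) \<le> (cmod a)\<^sup>2"
proof -
  define d where "d = 1 + cnj a * z"
  define v where "v = a - cnj a * z\<^sup>2"
  have az: "cmod (cnj a * z) = cmod a / 2"
    using z by (simp add: norm_mult)
  have d: "cmod d \<ge> 19/20"
    using norm_triangle_ineq2[of 1 "- (cnj a * z)"] az a by (simp add: d_def)
  have v: "cmod v \<le> 5/4 * cmod a"
    using norm_triangle_ineq4[of a "cnj a * z\<^sup>2"] z by (simp add: v_def norm_mult norm_power power2_eq_square)
  have d0: "d \<noteq> 0"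
    using d by auto
  have quotient: "moebius_disc a z - z = v / d"
    using d0 by (simp add: moebius_disc_def d_def v_def field_simps power2_eq_square)
  have "cmod (moebius_disc a z - z) = cmod v / cmod d"
    by (simp add: quotient norm_divide)
  also have "\<dots> \<le> (5/4 * cmod a) / (19/20)"
    using v d by (intro frac_le) auto
  also have "\<dots> \<le> 2 * cmod a"
    by simp
  finally show "cmod (moebius_disc a z - z) \<le> 2 * cmod a" .
  have "moebius_disc a z - z - v = - v * (cnj a * z) / d"
    using d0 by (simp add: quotient d_def field_simps)
  then have "cmod (moebius_disc a z - z - v) = cmod v * (cmod a / 2) / cmod d"
    by (simp add: norm_divide norm_mult z)
  also have "\<dots> \<le> (5/4 * cmod a) * (cmod a / 2) / (19/20)"
    using v d by (intro frac_le mult_right_mono) auto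
  also have "\<dots> \<le> (cmod a)\<^sup>2"
    by (simp add: power2_eq_square)
  finally show "cmod (moebius_disc a z - z - (a - cnj a * z\<^sup>2)) \<le> (cmod a)\<^sup>2"
    unfolding v_def .
qed

lemma norm_taylor_remainder_le:
  assumes f: "f holomorphic_on S" "open S" and K: "convex K" "K \<subseteq> S"
    and B: "\<And>x. x \<in> K \<Longrightarrow> cmod (deriv (deriv f) x) \<le> B"
    and "w \<in> K" "z \<in> K"
  shows "cmod (f z - f w - deriv f w * (z - w)) \<le> B * (cmod (z - w))\<^sup>2"
proof -
  have "cmod ((deriv ^^ 0) f z - (\<Sum>i\<le>1. (deriv ^^ i) f w * (z - w) ^ i / fact i))
      \<le> B * cmod (z - w) ^ Suc 1 / fact 1"
  proof (rule complex_Taylor[OF K(1)])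
    fix i :: nat and x assume "x \<in> K"
    moreover have "(deriv ^^ i) f holomorphic_on S"
      using f by (rule holomorphic_higher_deriv)
    ultimately show "((deriv ^^ i) f has_field_derivative (deriv ^^ Suc i) f x) (at x within K)"
      using f K(2) by (auto intro: holomorphic_derivI)
  qed (use B assms(6,7) in \<open>auto simp: numeral_2_eq_2\<close>)
  then show ?thesis
    by (simp add: algebra_simps power2_eq_square)
qed

lemma norm_moebius_compose_minus_variation_le:
  assumes F: "F holomorphic_on ball 0 1" "F 0 = 0"
    and a: "cmod a \<le> 1/10" and z: "cmod z = 1/2"
    and B: "\<And>x. x \<in> cball 0 (3/4) \<Longrightarrow> cmod (deriv (deriv F) x) \<le> B"
    and B1: "\<And>x. x \<in> cball 0 (3/4) \<Longrightarrow> cmod (deriv F x) \<le> B1"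
  shows "cmod (F (moebius_disc a z) - F a - moebius_variation F a z) \<le> (5 * B + B1) * (cmod a)\<^sup>2"
proof -
  define u where "u = moebius_disc a z - z"
  define v where "v = a - cnj a * z\<^sup>2"
  note bounds = moebius_disc_minus_id_bounds[OF a z, folded u_def v_def]
  have K: "convex (cball (0::complex) (3/4))" "cball (0::complex) (3/4) \<subseteq> ball 0 1"
    by auto
  have "cmod (moebius_disc a z) \<le> cmod z + cmod u"
    using norm_triangle_ineq[of z u] by (simp add: u_def)
  then have in_K: "0 \<in> cball 0 (3/4)" "a \<in> cball 0 (3/4)" "z \<in> cball 0 (3/4)"
    "moebius_disc a z \<in> cball 0 (3/4)"
    using a z bounds(1) by simp_all
  have "0 \<le> B"
    using B[OF in_K(1)] norm_ge_zero order_trans by blast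
  have "cmod (F (moebius_disc a z) - F z - deriv F z * u) \<le> B * (cmod u)\<^sup>2"
    using norm_taylor_remainder_le[OF F(1) open_ball K B in_K(3,4)] by (simp add: u_def)
  also have "\<dots> \<le> B * (2 * cmod a)\<^sup>2"
    using \<open>0 \<le> B\<close> bounds(1) by (intro mult_left_mono power_mono) auto
  finally have T1: "cmod (F (moebius_disc a z) - F z - deriv F z * u) \<le> B * (2 * cmod a)\<^sup>2" .
  have T2: "cmod (deriv F z * (u - v)) \<le> B1 * (cmod a)\<^sup>2"
    unfolding norm_mult using B1[OF in_K(3)] bounds(2)
    by (intro mult_mono) (auto intro: order_trans[OF norm_ge_zero])
  have T3: "cmod (F a - F 0 - deriv F 0 * (a - 0)) \<le> B * (cmod a)\<^sup>2"
    using norm_taylor_remainder_le[OF F(1) open_ball K B in_K(1,2)] by simp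
  have "F (moebius_disc a z) - F a - moebius_variation F a z
      = (F (moebius_disc a z) - F z - deriv F z * u) + deriv F z * (u - v)
        - (F a - F 0 - deriv F 0 * (a - 0))"
    unfolding moebius_variation_def u_def v_def F(2) by (simp add: algebra_simps)
  also have "cmod \<dots> \<le> B * (2 * cmod a)\<^sup>2 + B1 * (cmod a)\<^sup>2 + B * (cmod a)\<^sup>2"
    using T1 T2 T3 norm_triangle_ineq4 norm_triangle_ineq order_trans add_mono
    by (smt (verit))
  finally show ?thesis
    by (simp add: algebra_simps power2_eq_square)
qed

lemma taylor_coeff_moebius_compose_approx:
  assumes F: "F \<in> bloch_admissible"
  obtains K where "K \<ge> 0"
    and "\<And>a k. cmod a \<le> 1/10 \<Longrightarrow> k \<ge> 1 \<Longrightarrow>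
      cmod (taylor_coeff (\<lambda>z. F (moebius_disc a z) - F a) k
        - (taylor_coeff F k + coeff_variation (taylor_coeff F) a k)) \<le> K * (cmod a)\<^sup>2 * 2 ^ k"
proof -
  have hol: "F holomorphic_on ball 0 1" and F0: "F 0 = 0"
    using F by (auto simp: bloch_admissible_iff)
  have "deriv F holomorphic_on ball 0 1" "deriv (deriv F) holomorphic_on ball 0 1"
    using hol by (auto intro!: holomorphic_deriv)
  moreover have "cball (0::complex) (3/4) \<subseteq> ball 0 1"
    by auto
  ultimately have cont: "continuous_on (cball 0 (3/4)) (deriv F)"
    "continuous_on (cball 0 (3/4)) (deriv (deriv F))"
    by (auto intro: continuous_on_subset[OF holomorphic_on_imp_continuous_on])
  obtain B1 where "B1 \<ge> 0" and B1: "\<And>x. x \<in> cball 0 (3/4) \<Longrightarrow> cmod (deriv F x) \<le> B1"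
    using continuous_on_compact_bound[OF compact_cball cont(1)] by blast
  obtain B where "B \<ge> 0" and B: "\<And>x. x \<in> cball 0 (3/4) \<Longrightarrow> cmod (deriv (deriv F) x) \<le> B"
    using continuous_on_compact_bound[OF compact_cball cont(2)] by blast
  show ?thesis
  proof
    show "5 * B + B1 \<ge> 0"
      using \<open>B \<ge> 0\<close> \<open>B1 \<ge> 0\<close> by simp
    fix a :: complex and k :: nat
    assume a: "cmod a \<le> 1/10" and "k \<ge> 1"
    have hol_G: "(\<lambda>z. F (moebius_disc a z) - F a) holomorphic_on ball 0 1"
      using bloch_admissible_moebius_compose[OF F] a by (simp add: bloch_admissible_iff)
    have hol_P: "moebius_variation F a holomorphic_on ball 0 1"
      unfolding moebius_variation_def[abs_def] using hol by (auto intro!: holomorphic_intros)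
    have "taylor_coeff (\<lambda>z. F (moebius_disc a z) - F a - moebius_variation F a z) k
        = taylor_coeff (\<lambda>z. F (moebius_disc a z) - F a) k - taylor_coeff (moebius_variation F a) k"
      using hol_G hol_P
      by (simp add: taylor_coeff_def higher_deriv_diff[of _ "ball 0 1"] diff_divide_distrib)
    then have "taylor_coeff (\<lambda>z. F (moebius_disc a z) - F a) k
        - (taylor_coeff F k + coeff_variation (taylor_coeff F) a k)
        = taylor_coeff (\<lambda>z. F (moebius_disc a z) - F a - moebius_variation F a z) k"
      by (simp add: taylor_coeff_moebius_variation[OF hol \<open>k \<ge> 1\<close>])
    also have "cmod \<dots> \<le> (5 * B + B1) * (cmod a)\<^sup>2 / (1/2) ^ k"
      using norm_moebius_compose_minus_variation_le[OF hol F0 a _ B B1]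
      by (intro norm_taylor_coeff_le_Cauchy[of _ "ball 0 1"] holomorphic_on_diff[OF hol_G hol_P]) auto
    finally show "cmod (taylor_coeff (\<lambda>z. F (moebius_disc a z) - F a) k
        - (taylor_coeff F k + coeff_variation (taylor_coeff F) a k)) \<le> (5 * B + B1) * (cmod a)\<^sup>2 * 2 ^ k"
      by (simp add: power_divide)
  qed
qed

lemma sum_weighted_telescope:
  fixes r :: "nat \<Rightarrow> real"
  shows "(\<Sum>k=1..n. real k * (real (k + 1) * r k - real (k - 1) * r (k - 1))) = real n * real (n + 1) * r n"
  by (induction n) (simp_all add: algebra_simps)

lemma sum_coeff_variation_telescope:
  "(\<Sum>k=1..n. real k * Re (cnj (b k) * coeff_variation b a k))
    = real n * real (n + 1) * Re (a * cnj (b n) * b (n + 1))"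
proof -
  define r where "r k = Re (a * cnj (b k) * b (k + 1))" for k
  have "Re (cnj (b k) * coeff_variation b a k) = real (k + 1) * r k - real (k - 1) * r (k - 1)" for k
    by (cases k) (simp_all add: coeff_variation_def r_def algebra_simps)
  then show ?thesis
    using sum_weighted_telescope[of r n] by (simp add: r_def)
qed

lemma power2_norm_add_ge:
  fixes x d e :: complex
  shows "(cmod x)\<^sup>2 + 2 * Re (cnj x * d) - 2 * cmod x * cmod e \<le> (cmod (x + d + e))\<^sup>2"
proof -
  have "(cmod (x + d + e))\<^sup>2 = (cmod x)\<^sup>2 + 2 * Re (cnj x * d) + 2 * Re (cnj x * e) + (cmod (d + e))\<^sup>2"
    by (simp only: cmod_power2) (simp add: power2_eq_square algebra_simps)
  moreover have "- 2 * cmod x * cmod e \<le> 2 * Re (cnj x * e)"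
    using abs_Re_le_cmod[of "cnj x * e"] by (simp add: norm_mult)
  moreover have "0 \<le> (cmod (d + e))\<^sup>2"
    by simp
  ultimately show ?thesis
    by linarith
qed

lemma coeff_energy_moebius_compose_ge:
  assumes F: "F \<in> bloch_admissible"
  obtains D where "D \<ge> 0"
    and "\<And>a. cmod a \<le> 1/10 \<Longrightarrow>
      coeff_energy n F + 2 * real n * real (n + 1) * Re (a * cnj (taylor_coeff F n) * taylor_coeff F (n + 1))
        - D * (cmod a)\<^sup>2 \<le> coeff_energy n (\<lambda>z. F (moebius_disc a z) - F a)"
proof -
  define b where "b = taylor_coeff F"
  obtain K where "K \<ge> 0" and approx: "\<And>a k. cmod a \<le> 1/10 \<Longrightarrow> k \<ge> 1 \<Longrightarrow>
      cmod (taylor_coeff (\<lambda>z. F (moebius_disc a z) - F a) k - (b k + coeff_variation b a k))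
        \<le> K * (cmod a)\<^sup>2 * 2 ^ k"
    using taylor_coeff_moebius_compose_approx[OF F] unfolding b_def by blast
  define D where "D = 2 * (\<Sum>k=1..n. real k * cmod (b k) * K * 2 ^ k)"
  show ?thesis
  proof
    show "D \<ge> 0"
      using \<open>K \<ge> 0\<close> by (auto simp: D_def intro!: sum_nonneg)
    fix a :: complex assume a: "cmod a \<le> 1/10"
    define G where "G z = F (moebius_disc a z) - F a" for z
    define L where "L k = Re (cnj (b k) * coeff_variation b a k)" for k
    have "2 * real n * real (n + 1) * Re (a * cnj (b n) * b (n + 1)) = 2 * (\<Sum>k=1..n. real k * L k)"
      unfolding L_def sum_coeff_variation_telescope by simp
    then have "coeff_energy n F + 2 * real n * real (n + 1) * Re (a * cnj (b n) * b (n + 1)) - D * (cmod a)\<^sup>2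
        = (\<Sum>k=1..n. real k * ((cmod (b k))\<^sup>2 + 2 * L k - 2 * cmod (b k) * (K * (cmod a)\<^sup>2 * 2 ^ k)))"
      unfolding coeff_energy_def D_def b_def
      by (simp add: sum_distrib_left sum_subtractf sum.distrib algebra_simps)
    also have "\<dots> \<le> (\<Sum>k=1..n. real k * (cmod (taylor_coeff G k))\<^sup>2)"
    proof (intro sum_mono mult_left_mono)
      fix k assume "k \<in> {1..n}"
      define e where "e = taylor_coeff G k - (b k + coeff_variation b a k)"
      have "cmod e \<le> K * (cmod a)\<^sup>2 * 2 ^ k"
        using approx[OF a, of k] \<open>k \<in> {1..n}\<close> by (simp add: e_def G_def[abs_def])
      then have "2 * cmod (b k) * cmod e \<le> 2 * cmod (b k) * (K * (cmod a)\<^sup>2 * 2 ^ k)"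
        by (intro mult_left_mono) auto
      moreover have "taylor_coeff G k = b k + coeff_variation b a k + e"
        by (simp add: e_def)
      ultimately show "(cmod (b k))\<^sup>2 + 2 * L k - 2 * cmod (b k) * (K * (cmod a)\<^sup>2 * 2 ^ k)
          \<le> (cmod (taylor_coeff G k))\<^sup>2"
        using power2_norm_add_ge[of "b k" "coeff_variation b a k" e] unfolding L_def by auto
    qed simp
    finally show "coeff_energy n F + 2 * real n * real (n + 1) * Re (a * cnj (taylor_coeff F n) * taylor_coeff F (n + 1))
        - D * (cmod a)\<^sup>2 \<le> coeff_energy n (\<lambda>z. F (moebius_disc a z) - F a)"
      by (simp add: coeff_energy_def G_def[abs_def] b_def)
  qed
qed

lemma exists_quadratic_less_linear:
  fixes c D \<epsilon> :: real
  assumes "0 < c" "0 \<le> D" "0 < \<epsilon>"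
  obtains t where "0 < t" "t \<le> \<epsilon>" "D * t\<^sup>2 < c * t"
proof
  define t where "t = min \<epsilon> (c / (D + 1))"
  show "0 < t"
    using assms by (simp add: t_def)
  show "t \<le> \<epsilon>"
    unfolding t_def by (rule min.cobounded1)
  have "t \<le> c / (D + 1)"
    unfolding t_def by (rule min.cobounded2)
  then have "(D + 1) * t \<le> c"
    using assms(2) by (simp add: pos_le_divide_eq mult.commute)
  then show "D * t\<^sup>2 < c * t"
    using \<open>0 < t\<close> by (simp add: power2_eq_square algebra_simps)
qed

lemma coeff_energy_moebius_compose_gt:
  assumes F: "F \<in> bloch_admissible" and "n \<ge> 1"
    and "taylor_coeff F n * taylor_coeff F (n + 1) \<noteq> 0"
  obtains a where "cmod a < 1" "coeff_energy n F < coeff_energy n (\<lambda>z. F (moebius_disc a z) - F a)"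
proof -
  define w where "w = cnj (taylor_coeff F n) * taylor_coeff F (n + 1)"
  have "cmod w > 0"
    using assms(3) by (simp add: w_def)
  obtain D where "D \<ge> 0" and energy_ge: "\<And>a. cmod a \<le> 1/10 \<Longrightarrow>
      coeff_energy n F + 2 * real n * real (n + 1) * Re (a * w) - D * (cmod a)\<^sup>2
        \<le> coeff_energy n (\<lambda>z. F (moebius_disc a z) - F a)"
    using coeff_energy_moebius_compose_ge[OF F, of n] by (auto simp: w_def mult.assoc)
  have "0 < 2 * real n * real (n + 1) * cmod w"
    using \<open>n \<ge> 1\<close> \<open>cmod w > 0\<close> by simp
  then obtain t where "0 < t" "t \<le> 1/10" and gain: "D * t\<^sup>2 < 2 * real n * real (n + 1) * cmod w * t"
    by (rule exists_quadratic_less_linear[OF _ \<open>D \<ge> 0\<close>, of _ "1/10"]) auto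
  define a where "a = of_real t * cnj w / of_real (cmod w)"
  have "cmod a = t"
    using \<open>cmod w > 0\<close> \<open>t > 0\<close> by (simp add: a_def norm_mult norm_divide)
  have "a * w = of_real t * (w * cnj w) / of_real (cmod w)"
    by (simp add: a_def algebra_simps)
  also have "\<dots> = of_real (t * cmod w)"
    using \<open>cmod w > 0\<close> by (simp add: complex_norm_square[symmetric] power2_eq_square)
  finally have "Re (a * w) = t * cmod w"
    by simp
  show ?thesis
  proof
    show "cmod a < 1"
      using \<open>cmod a = t\<close> \<open>t \<le> 1/10\<close> by simp
    show "coeff_energy n F < coeff_energy n (\<lambda>z. F (moebius_disc a z) - F a)"
      using energy_ge[of a, unfolded \<open>cmod a = t\<close> \<open>Re (a * w) = t * cmod w\<close>] gain \<open>t \<le> 1/10\<close>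
      by (simp add: algebra_simps)
  qed
qed

theorem mainTheorem5:
  fixes n :: nat and F :: "complex \<Rightarrow> complex"
  assumes "n \<ge> 1"
    and "F \<in> bloch_admissible"
    and "coeff_energy n F = M_bloch n"
  shows "taylor_coeff F n * taylor_coeff F (n + 1) = 0"
proof (rule ccontr)
  assume "taylor_coeff F n * taylor_coeff F (n + 1) \<noteq> 0"
  then obtain a where a: "cmod a < 1"
    and gain: "coeff_energy n F < coeff_energy n (\<lambda>z. F (moebius_disc a z) - F a)"
    using coeff_energy_moebius_compose_gt[OF assms(2,1)] by blast
  have "coeff_energy n (\<lambda>z. F (moebius_disc a z) - F a) \<le> M_bloch n"
    using coeff_energy_le_M_bloch bloch_admissible_moebius_compose[OF assms(2) a] by blast
  then show False
    using gain assms(3) by simp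
qed

end
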